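(* Let $U$ be a two-phase quantum walk with one defect. Then $U$ is unitary equivalent to \begin{align*} U_{r_+,r_-,r_0,\mu_1,\mu_2,\mu_3}={}&|e_1^{-1}\rangle\langle r_0e_1^0+e^{i\mu_1}s_0e_2^0|+|e_2^{1}\rangle\langle -e^{i\mu_2}s_0e_1^0+e^{i(\mu_1+\mu_2)}r_0e_2^0|\\ &+\sum_{n\ge1}|e_1^{n-1}\rangle\langle r_+e_1^n+s_+e_2^n|+|e_2^{n+1}\rangle\langle -e^{i\mu_3}s_+e_1^n+e^{i\mu_3}r_+e_2^n|\\ &+\sum_{n\le-1}|e_1^{n-1}\rangle\langle r_-e_1^n+s_-e_2^n|+|e_2^{n+1}\rangle\langle -s_-e_1^n+r_-e_2^n| \end{align*} for some $0\le r_+,r_-,r_0\le1$ and $\mu_1,\mu_2,\mu_3\in\mathbb R$, where $s_\varepsilon=\sqrt{1-r_\varepsilon^2}$ for $\varepsilon=+,-,0$.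
   Context: Let $\mathcal H_n=\mathbb C^2$ for $n\in\mathbb Z$, $\mathcal H=\bigoplus_{n\in\mathbb Z}\mathcal H_n$, $P_n$ the orthogonal projection onto $\mathcal H_n$, and $\{e_1^n,e_2^n\}$ the standard basis of $\mathcal H_n$; each $\mathcal H_n$ is identified with $\mathbb C^2$. Dirac notation: $|x\rangle\langle y|$ is the operator $z\mapsto\langle y,z\rangle x$ (inner product conjugate-linear in the first argument). A one-dimensional quantum walk is a unitary $U$ on $\mathcal H$ with $\operatorname{rank}(P_nUP_m)=1$ if $m=n\pm1$ and $0$ otherwise. Every such $U$ can be written as $U=\sum_{n\in\mathbb Z}|\xi_{n-1,n}\rangle\langle\zeta_{n-1,n}|+|\xi_{n+1,n}\rangle\langle\zeta_{n+1,n}|$, where $\{\xi_{n,n+1},\xi_{n+1,n}\}_{n\in\mathbb Z}$ and $\{\zeta_{n,n+1},\zeta_{n+1,n}\}_{n\in\mathbb Z}$ are orthonormal bases of $\mathcal H$ with $\xi_{n,n+1},\zeta_{n+1,n}\in\mathcal H_n$ and $\xi_{n+1,n},\zeta_{n,n+1}\in\mathcal H_{n+1}$. $U$ is a two-phase quantum walk with one defect if it has such a representation for which there exist $\xi_1^\pm,\xi_2^\pm,\zeta_1^\pm,\zeta_2^\pm\in\mathbb C^2$ with $\xi_{n,n+1}=\xi_1^+$, $\xi_{n,n-1}=\xi_2^+$, $\zeta_{n-1,n}=\zeta_1^+$, $\zeta_{n+1,n}=\zeta_2^+$ for all $n\ge1$, and $\xi_{n,n+1}=\xi_1^-$, $\xi_{n,n-1}=\xi_2^-$,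 $\zeta_{n-1,n}=\zeta_1^-$, $\zeta_{n+1,n}=\zeta_2^-$ for all $n\le-1$. Since $U$ and $e^{i\lambda}U$ are identified, unitaries $U_1,U_2$ on $\mathcal H$ are called unitary equivalent if there exist $\lambda\in\mathbb R$ and a unitary $W=\bigoplus_{n}W_n$ ($W_n$ unitary on $\mathcal H_n$) with $e^{i\lambda}WU_1W^*=U_2$. *)

theory Defs
  imports "HOL-Analysis.Analysis"
begin

text \<open>Each fibre H_n = C^2 is modelled by pairs of complex numbers; a vector of
  H = direct sum over n in Z of H_n is a function from int to such pairs.\<close>

type_synonym site = "complex \<times> complex"
type_synonym state = "int \<Rightarrow> site"

definition sadd :: "site \<Rightarrow> site \<Rightarrow> site" where
  "sadd x y = (fst x + fst y, snd x + snd y)"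

definition ssc :: "complex \<Rightarrow> site \<Rightarrow> site" where
  "ssc c x = (c * fst x, c * snd x)"

definition cinner :: "site \<Rightarrow> site \<Rightarrow> complex" where
  "cinner x y = cnj (fst x) * fst y + cnj (snd x) * snd y"

definition e1 :: site where "e1 = (1, 0)"
definition e2 :: site where "e2 = (0, 1)"

definition onb2 :: "site \<Rightarrow> site \<Rightarrow> bool" where
  "onb2 a b \<longleftrightarrow> cinner a a = 1 \<and> cinner b b = 1 \<and> cinner a b = 0"

definition ell2 :: "state set" where
  "ell2 = {f. (\<lambda>n. (cmod (fst (f n)))\<^sup>2 + (cmod (snd (f n)))\<^sup>2) summable_on UNIV}"

definition Hinner :: "state \<Rightarrow> state \<Rightarrow> complex" where
  "Hinner f g = (\<Sum>\<^sub>\<infinity>n. cinner (f n) (g n))"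

definition unitary_H :: "(state \<Rightarrow> state) \<Rightarrow> bool" where
  "unitary_H U \<longleftrightarrow>
     (\<forall>f\<in>ell2. U f \<in> ell2) \<and> (\<forall>g\<in>ell2. \<exists>f\<in>ell2. U f = g) \<and>
     (\<forall>f\<in>ell2. \<forall>g\<in>ell2. \<forall>c.
        U (\<lambda>n. sadd (ssc c (f n)) (g n)) = (\<lambda>n. sadd (ssc c (U f n)) (U g n))) \<and>
     (\<forall>f\<in>ell2. \<forall>g\<in>ell2. Hinner (U f) (U g) = Hinner f g)"

definition delta :: "int \<Rightarrow> site \<Rightarrow> state" where
  "delta m v = (\<lambda>k. if k = m then v else (0, 0))"

definition rank_one :: "(site \<Rightarrow> site) \<Rightarrow> bool" where
  "rank_one g \<longleftrightarrow> (\<exists>w. w \<noteq> (0, 0) \<and> range g = {ssc c w | c. True})"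

text \<open>One-dimensional quantum walk: rank (P_n U P_m) = 1 if m = n +- 1, and 0 otherwise.
  The operator P_n U P_m is identified with the block map v |-> (U (delta m v)) n.\<close>
definition quantum_walk :: "(state \<Rightarrow> state) \<Rightarrow> bool" where
  "quantum_walk U \<longleftrightarrow> unitary_H U \<and>
     (\<forall>n m. if m = n + 1 \<or> m = n - 1 then rank_one (\<lambda>v. U (delta m v) n)
            else (\<forall>v. U (delta m v) n = (0, 0)))"

text \<open>The operator  sum_n |xi_{n-1,n}><zeta_{n-1,n}| + |xi_{n+1,n}><zeta_{n+1,n}|
  with the fibre-wise parametrisation
  A k = xi_{k,k+1}, B k = xi_{k,k-1}  (both in H_k),
  C k = zeta_{k-1,k}, D k = zeta_{k+1,k}  (both in H_k).\<close>
definition walk_repr :: "(int \<Rightarrow> site) \<Rightarrow> (int \<Rightarrow> site) \<Rightarrow> (int \<Rightarrow> site) \<Rightarrow> (int \<Rightarrow> site)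
    \<Rightarrow> state \<Rightarrow> state" where
  "walk_repr A B C D f = (\<lambda>k. sadd (ssc (cinner (C (k + 1)) (f (k + 1))) (A k))
                                   (ssc (cinner (D (k - 1)) (f (k - 1))) (B k)))"

definition two_phase_one_defect :: "(state \<Rightarrow> state) \<Rightarrow> bool" where
  "two_phase_one_defect U \<longleftrightarrow> quantum_walk U \<and>
     (\<exists>A B C D. (\<forall>n. onb2 (A n) (B n) \<and> onb2 (C n) (D n)) \<and>
        (\<forall>f\<in>ell2. U f = walk_repr A B C D f) \<and>
        (\<exists>xi1p xi2p ze1p ze2p xi1m xi2m ze1m ze2m. \<forall>n::int.
           (n \<ge> 1 \<longrightarrow> A n = xi1p \<and> B n = xi2p \<and> C n = ze1p \<and> D n = ze2p) \<and>
           (n \<le> -1 \<longrightarrow> A n = xi1m \<and> B n = xi2m \<and> C n = ze1m \<and> D n = ze2m)))"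

text \<open>Unitary on C^2 (linear isometry of C^2, hence bijective).\<close>
definition unitary2 :: "(site \<Rightarrow> site) \<Rightarrow> bool" where
  "unitary2 w \<longleftrightarrow> (\<forall>c x y. w (sadd (ssc c x) y) = sadd (ssc c (w x)) (w y)) \<and>
                   (\<forall>x y. cinner (w x) (w y) = cinner x y)"

definition unitary_equiv :: "(state \<Rightarrow> state) \<Rightarrow> (state \<Rightarrow> state) \<Rightarrow> bool" where
  "unitary_equiv U1 U2 \<longleftrightarrow>
     (\<exists>(lam::real) (W::int \<Rightarrow> site \<Rightarrow> site). (\<forall>n. unitary2 (W n)) \<and>
        (\<forall>f\<in>ell2. (\<lambda>n. ssc (exp (\<i> * complex_of_real lam))
                           (W n (U1 (\<lambda>m. inv (W m) (f m)) n))) = U2 f))"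

definition sval :: "real \<Rightarrow> real" where "sval r = sqrt (1 - r\<^sup>2)"

text \<open>Bra vectors of the normal form: the operator sends f to
  sum_n e_1^{n-1} <v_n, f n> + e_2^{n+1} <w_n, f n>.\<close>
definition vref :: "real \<Rightarrow> real \<Rightarrow> real \<Rightarrow> real \<Rightarrow> int \<Rightarrow> site" where
  "vref rp rm r0 mu1 n =
     (if n = 0 then (complex_of_real r0, exp (\<i> * complex_of_real mu1) * complex_of_real (sval r0))
      else if n \<ge> 1 then (complex_of_real rp, complex_of_real (sval rp))
      else (complex_of_real rm, complex_of_real (sval rm)))"

definition wref :: "real \<Rightarrow> real \<Rightarrow> real \<Rightarrow> real \<Rightarrow> real \<Rightarrow> real \<Rightarrow> int \<Rightarrow> site" where
  "wref rp rm r0 mu1 mu2 mu3 n =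
     (if n = 0 then (- exp (\<i> * complex_of_real mu2) * complex_of_real (sval r0),
                     exp (\<i> * complex_of_real (mu1 + mu2)) * complex_of_real r0)
      else if n \<ge> 1 then (- exp (\<i> * complex_of_real mu3) * complex_of_real (sval rp),
                          exp (\<i> * complex_of_real mu3) * complex_of_real rp)
      else (- complex_of_real (sval rm), complex_of_real rm))"

definition Uref :: "real \<Rightarrow> real \<Rightarrow> real \<Rightarrow> real \<Rightarrow> real \<Rightarrow> real \<Rightarrow> state \<Rightarrow> state" where
  "Uref rp rm r0 mu1 mu2 mu3 f =
     (\<lambda>k. sadd (ssc (cinner (vref rp rm r0 mu1 (k + 1)) (f (k + 1))) e1)
               (ssc (cinner (wref rp rm r0 mu1 mu2 mu3 (k - 1)) (f (k - 1))) e2))"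

end

theory Submission
  imports Defs
begin

(* Conjugate U by the fibrewise unitary W_n sending the kets xi_{n,n+1}, xi_{n,n-1} of H_n to
   phase multiples e^{i ta_n} e_1, e^{i tb_n} e_2. The result is a walk with kets e_1, e_2 whose
   bras are the columns of the local coin matrices (<xi, zeta>), twisted by the gauge phases.
   Every 2x2 unitary has the form [[r e^{i alpha}, -s e^{i(tau - beta)}], [s e^{i beta}, r e^{i(tau - alpha)}]]
   with s = sqrt (1 - r^2), and there are only three coins (on n < 0, at n = 0, on n > 0).
   Choosing ta, tb affine in n on each half-line, together with the global phase lambda,
   removes all phases except mu_1, mu_2, mu_3. *)

lemma cinner_commute: "cinner y x = cnj (cinner x y)"
  by (simp add: cinner_def)

lemma cinner_sadd_ssc: "cinner x (sadd (ssc c u) (ssc d w)) = c * cinner x u + d * cinner x w"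
  by (simp add: cinner_def sadd_def ssc_def algebra_simps)

lemma onb2_expansion:
  assumes "onb2 a b"
  shows "sadd (ssc (cinner a x) a) (ssc (cinner b x) b) = x"
proof -
  obtain a1 a2 b1 b2 x1 x2 where p: "a = (a1, a2)" "b = (b1, b2)" "x = (x1, x2)"
    by (cases a, cases b, cases x) auto
  have "cnj a1 * a1 + cnj a2 * a2 = 1" "cnj b1 * b1 + cnj b2 * b2 = 1"
    and ab: "cnj a1 * b1 + cnj a2 * b2 = 0"
    using assms by (auto simp: onb2_def cinner_def p)
  moreover have "a1 * cnj b1 + a2 * cnj b2 = 0"
    using arg_cong[OF ab, of cnj] by simp
  ultimately have "(cnj a1 * x1 + cnj a2 * x2) * a1 + (cnj b1 * x1 + cnj b2 * x2) * b1 = x1"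
    and "(cnj a1 * x1 + cnj a2 * x2) * a2 + (cnj b1 * x1 + cnj b2 * x2) * b2 = x2"
    by algebra+
  then show ?thesis by (simp add: p sadd_def ssc_def cinner_def)
qed

lemma onb2_parseval:
  assumes "onb2 a b"
  shows "cinner x y = cnj (cinner a x) * cinner a y + cnj (cinner b x) * cinner b y"
proof -
  have "cinner x y = cinner x (sadd (ssc (cinner a y) a) (ssc (cinner b y) b))"
    using onb2_expansion[OF assms, of y] by simp
  then show ?thesis
    by (simp add: cinner_sadd_ssc cinner_commute[of x] mult.commute)
qed

lemma onb2_cinner_simps:
  assumes "onb2 a b"
  shows "cinner a a = 1" "cinner b b = 1" "cinner a b = 0" "cinner b a = 0"
  using assms by (auto simp: onb2_def cinner_commute[of b a])

definition phase_coords :: "real \<Rightarrow> real \<Rightarrow> site \<Rightarrow> site \<Rightarrow> site \<Rightarrow> site" where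
  "phase_coords p q a b x = (cis p * cinner a x, cis q * cinner b x)"

definition phase_coords_inv :: "real \<Rightarrow> real \<Rightarrow> site \<Rightarrow> site \<Rightarrow> site \<Rightarrow> site" where
  "phase_coords_inv p q a b y = sadd (ssc (cis (- p) * fst y) a) (ssc (cis (- q) * snd y) b)"

lemma phase_coords_of_comb:
  assumes "onb2 a b"
  shows "phase_coords p q a b (sadd (ssc c a) (ssc d b)) = (cis p * c, cis q * d)"
  by (simp add: phase_coords_def cinner_sadd_ssc onb2_cinner_simps[OF assms])

lemma phase_coords_inv_left:
  assumes "onb2 a b"
  shows "phase_coords_inv p q a b (phase_coords p q a b x) = x"
  using onb2_expansion[OF assms, of x]
  by (simp add: phase_coords_inv_def phase_coords_def mult.assoc[symmetric] cis_mult)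

lemma phase_coords_inv_right:
  assumes "onb2 a b"
  shows "phase_coords p q a b (phase_coords_inv p q a b y) = y"
  by (simp add: phase_coords_inv_def phase_coords_of_comb[OF assms] mult.assoc[symmetric] cis_mult)

lemma inv_phase_coords:
  assumes "onb2 a b"
  shows "inv (phase_coords p q a b) = phase_coords_inv p q a b"
  by (rule inv_equality) (simp_all add: phase_coords_inv_left phase_coords_inv_right assms)

lemma cinner_phase_coords:
  assumes "onb2 a b"
  shows "cinner (phase_coords p q a b x) (phase_coords p q a b y) = cinner x y"
proof -
  have unimodular: "cnj (cis t * u) * (cis t * v) = cnj u * v" for t u v
    using cis_mult[of "- t" t] by (simp add: cis_cnj algebra_simps)
  have "cinner (phase_coords p q a b x) (phase_coords p q a b y)
      = cnj (cinner a x) * cinner a y + cnj (cinner b x) * cinner b y"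
    by (simp only: phase_coords_def cinner_def fst_conv snd_conv unimodular)
  then show ?thesis
    using onb2_parseval[OF assms, of x y] by simp
qed

lemma unitary2_phase_coords:
  assumes "onb2 a b"
  shows "unitary2 (phase_coords p q a b)"
  unfolding unitary2_def
  by (simp add: cinner_phase_coords[OF assms])
     (simp add: phase_coords_def cinner_def sadd_def ssc_def algebra_simps)

lemma ell2_if_fibrewise_norm_eq:
  assumes "f \<in> ell2" and "\<And>n. cinner (g n) (g n) = cinner (f n) (f n)"
  shows "g \<in> ell2"
proof -
  have norm_sq: "(cmod (fst v))\<^sup>2 + (cmod (snd v))\<^sup>2 = Re (cinner v v)" for v :: site
    by (cases v) (simp add: cinner_def cmod_power2, simp add: power2_eq_square)
  show ?thesis using assms by (simp add: ell2_def norm_sq)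
qed

lemma unitary_equiv_walk_repr_gauge:
  fixes lam :: real and ta tb :: "int \<Rightarrow> real"
  assumes onb: "\<And>n. onb2 (A n) (B n)"
    and U: "\<And>f. f \<in> ell2 \<Longrightarrow> U f = walk_repr A B C D f"
    and v: "\<And>m. v m = (cis (ta m - ta (m - 1) - lam) * cinner (A m) (C m),
                        cis (tb m - ta (m - 1) - lam) * cinner (B m) (C m))"
    and w: "\<And>m. w m = (cis (ta m - tb (m + 1) - lam) * cinner (A m) (D m),
                        cis (tb m - tb (m + 1) - lam) * cinner (B m) (D m))"
  shows "unitary_equiv U (walk_repr (\<lambda>_. e1) (\<lambda>_. e2) v w)"
proof -
  define W where "W n = phase_coords (ta n) (tb n) (A n) (B n)" for n
  have "(\<lambda>n. ssc (exp (\<i> * lam)) (W n (U (\<lambda>m. inv (W m) (f m)) n)))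
          = walk_repr (\<lambda>_. e1) (\<lambda>_. e2) v w f" if f: "f \<in> ell2" for f
  proof
    fix n
    define g where "g m = inv (W m) (f m)" for m
    have Wg: "W m (g m) = f m" for m
      by (simp add: g_def W_def inv_phase_coords phase_coords_inv_right onb)
    have g_inner: "cinner E (g m) = cinner (W m E) (f m)" for E m
      using cinner_phase_coords[OF onb, of "ta m" "tb m" m E "g m"] Wg by (simp add: W_def)
    have "g \<in> ell2"
      using f by (rule ell2_if_fibrewise_norm_eq) (simp add: g_inner Wg)
    then have "W n (U g n) = (cis (ta n) * cinner (W (n + 1) (C (n + 1))) (f (n + 1)),
                              cis (tb n) * cinner (W (n - 1) (D (n - 1))) (f (n - 1)))"
      by (simp add: U walk_repr_def W_def phase_coords_of_comb onb g_inner)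
    moreover have "cis lam * (cis s * cinner (W m E) u) =
        cinner (cis (ta m - s - lam) * cinner (A m) E, cis (tb m - s - lam) * cinner (B m) E) u"
      for s m E u
    proof -
      have "cnj (cis (t - s - lam)) = cis lam * (cis s * cnj (cis t))" for t
        by (simp add: cis_cnj cis_mult algebra_simps)
      then show ?thesis
        by (simp add: W_def phase_coords_def cinner_def algebra_simps)
    qed
    ultimately show "ssc (exp (\<i> * lam)) (W n (U g n)) = walk_repr (\<lambda>_. e1) (\<lambda>_. e2) v w f n"
      by (simp add: walk_repr_def ssc_def sadd_def e1_def e2_def v w cis_conv_exp[symmetric])
  qed
  moreover have "unitary2 (W n)" for n
    by (simp add: W_def unitary2_phase_coords onb)
  ultimately show ?thesis
    unfolding unitary_equiv_def by blast
qed

lemma orthogonal_to_unit_pair: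
  assumes ab: "cnj a * a + cnj b * b = 1" and xy: "cnj x * x + cnj y * y = 1"
    and orth: "cnj a * x + cnj b * y = 0"
  obtains t where "cmod t = 1" "x = - t * cnj b" "y = t * cnj a"
proof
  define t where "t = a * y - b * x"
  show x: "x = - t * cnj b" and y: "y = t * cnj a"
    unfolding t_def using ab orth by algebra+
  have "cnj t * t = 1"
    using xy ab unfolding x y by (simp add: algebra_simps) algebra
  then have "(cmod t)\<^sup>2 = 1"
    by (metis complex_norm_square mult.commute of_real_eq_1_iff)
  then show "cmod t = 1"
    using norm_ge_zero[of t] by (auto simp: power2_eq_1_iff)
qed

lemma unit_pair_cmod:
  assumes "cnj a * a + cnj b * b = 1"
  shows "cmod a \<le> 1" "cmod b = sval (cmod a)"
proof -
  have "complex_of_real ((cmod a)\<^sup>2 + (cmod b)\<^sup>2) = 1"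
    using assms complex_norm_square[of a] complex_norm_square[of b] by (simp add: mult.commute)
  then have sq: "(cmod a)\<^sup>2 + (cmod b)\<^sup>2 = 1"
    using of_real_eq_1_iff by blast
  then show "cmod b = sval (cmod a)"
    unfolding sval_def by (intro real_sqrt_unique[symmetric]) auto
  from sq have "(cmod a)\<^sup>2 \<le> 1"
    using zero_le_power2[of "cmod b"] by linarith
  then show "cmod a \<le> 1"
    by (simp add: abs_square_le_1)
qed

lemma cis_mult_polar: "cis s * (complex_of_real c * cis t) = complex_of_real c * cis (s + t)"
  by (simp add: cis_mult[symmetric] algebra_simps)

lemma polar_form: "z = complex_of_real (cmod z) * cis (Arg z)"
  using rcis_cmod_Arg[of z] by (simp add: rcis_def)

lemma unitary_matrix_polar:
  assumes ab: "cnj a * a + cnj b * b = 1" and xy: "cnj x * x + cnj y * y = 1"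
    and orth: "cnj a * x + cnj b * y = 0"
  obtains r \<alpha> \<beta> \<tau> where "0 \<le> r" "r \<le> 1"
    "a = of_real r * cis \<alpha>" "b = of_real (sval r) * cis \<beta>"
    "x = - (of_real (sval r) * cis (\<tau> - \<beta>))" "y = of_real r * cis (\<tau> - \<alpha>)"
proof -
  obtain t where t: "cmod t = 1" "x = - t * cnj b" "y = t * cnj a"
    using orthogonal_to_unit_pair[OF assms] .
  have cnj_polar: "cnj z = complex_of_real (cmod z) * cis (- Arg z)" for z
    using arg_cong[OF polar_form[of z], of cnj] unfolding complex_cnj_mult cis_cnj by simp
  obtain \<theta> where \<theta>: "t = cis \<theta>"
    using t(1) by (metis cis_Arg norm_zero sgn_div_norm scaleR_one zero_neq_one inverse_1)
  have "x = - (of_real (cmod b) * cis (\<theta> - Arg b))" "y = of_real (cmod a) * cis (\<theta> - Arg a)"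
    unfolding t(2,3) \<theta> cnj_polar by (simp_all add: cis_mult_polar)
  moreover have "b = of_real (sval (cmod a)) * cis (Arg b)"
    using polar_form[of b] unit_pair_cmod(2)[OF ab] by metis
  ultimately show ?thesis
    using that[OF norm_ge_zero unit_pair_cmod(1)[OF ab] polar_form[of a]] unit_pair_cmod(2)[OF ab]
    by metis
qed

definition coin_polar :: "site \<Rightarrow> site \<Rightarrow> site \<Rightarrow> site \<Rightarrow> real \<Rightarrow> real \<Rightarrow> real \<Rightarrow> real \<Rightarrow> bool"
  where "coin_polar a b c d r \<alpha> \<beta> \<tau> \<longleftrightarrow> 0 \<le> r \<and> r \<le> 1 \<and>
    cinner a c = of_real r * cis \<alpha> \<and> cinner b c = of_real (sval r) * cis \<beta> \<and>
    cinner a d = - (of_real (sval r) * cis (\<tau> - \<beta>)) \<and> cinner b d = of_real r * cis (\<tau> - \<alpha>)"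

lemma onb2_coin_polar:
  assumes AB: "onb2 a b" and CD: "onb2 c d"
  shows "\<exists>r \<alpha> \<beta> \<tau>. coin_polar a b c d r \<alpha> \<beta> \<tau>"
proof (rule unitary_matrix_polar)
  show "cnj (cinner a c) * cinner a c + cnj (cinner b c) * cinner b c = 1"
    and "cnj (cinner a d) * cinner a d + cnj (cinner b d) * cinner b d = 1"
    and "cnj (cinner a c) * cinner a d + cnj (cinner b c) * cinner b d = 0"
    using onb2_parseval[OF AB, of c c] onb2_parseval[OF AB, of d d] onb2_parseval[OF AB, of c d] CD
    by (simp_all add: onb2_def)
qed (auto simp: coin_polar_def)

lemma gauge_phases:
  fixes \<alpha> \<beta> \<tau> :: "int \<Rightarrow> real"
  obtains ta :: "int \<Rightarrow> real" and lam :: real and tb :: "int \<Rightarrow> real" and mu1 mu2 mu3 :: real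
  where
    "\<And>m. ta m - ta (m - 1) - lam + \<alpha> (sgn m) = 0"
    "\<And>m. tb m - ta (m - 1) - lam + \<beta> (sgn m) = (if m = 0 then mu1 else 0)"
    "\<And>m. ta m - tb (m + 1) - lam + (\<tau> (sgn m) - \<beta> (sgn m))
           = (if m = 0 then mu2 else if m > 0 then mu3 else 0)"
    "\<And>m. tb m - tb (m + 1) - lam + (\<tau> (sgn m) - \<alpha> (sgn m))
           = (if m = 0 then mu1 + mu2 else if m > 0 then mu3 else 0)"
proof -
  \<comment> \<open>This choice of lam removes the last phase on the negative half-line; on the positive
    half-line the residue \<tau> 1 - 2 * lam survives as mu3.\<close>
  define lam where "lam = \<tau> (-1) / 2"
  then have lam: "\<tau> (-1) = 2 * lam" by simp
  define ta where "ta m = (if m < 0 then of_int (m + 1) * (lam - \<alpha> (-1))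
                           else lam - \<alpha> 0 + of_int m * (lam - \<alpha> 1))" for m :: int
  define tb where "tb m = (if m = 0 then lam - \<beta> (-1) else ta m + \<alpha> (sgn m) - \<beta> (sgn m))"
    for m :: int
  show ?thesis
    by (rule that[of ta lam tb "\<beta> 0 - \<beta> (-1)" "\<beta> 1 + \<tau> 0 - \<beta> 0 - 2 * lam" "\<tau> 1 - 2 * lam"])
       (auto simp: ta_def tb_def lam sgn_if algebra_simps add_eq_0_iff)
qed

lemma vref_sgn:
  "vref (r 1) (r (-1)) (r 0) mu1 m
     = (of_real (r (sgn m)), of_real (sval (r (sgn m))) * cis (if m = 0 then mu1 else 0))"
  by (simp add: vref_def sgn_if cis_conv_exp mult.commute)

lemma wref_sgn:
  "wref (r 1) (r (-1)) (r 0) mu1 mu2 mu3 m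
     = (- (of_real (sval (r (sgn m))) * cis (if m = 0 then mu2 else if m > 0 then mu3 else 0)),
        of_real (r (sgn m)) * cis (if m = 0 then mu1 + mu2 else if m > 0 then mu3 else 0))"
  by (simp add: wref_def sgn_if cis_conv_exp mult.commute)

lemma Uref_eq_walk_repr:
  "Uref rp rm r0 mu1 mu2 mu3
     = walk_repr (\<lambda>_. e1) (\<lambda>_. e2) (vref rp rm r0 mu1) (wref rp rm r0 mu1 mu2 mu3)"
  by (simp add: fun_eq_iff Uref_def walk_repr_def)

lemma two_phase_one_defectE:
  assumes "two_phase_one_defect U"
  obtains A B C D where "\<And>n. onb2 (A n) (B n)" "\<And>n. onb2 (C n) (D n)"
    "\<And>f. f \<in> ell2 \<Longrightarrow> U f = walk_repr A B C D f"
    "\<And>n. A n = A (sgn n) \<and> B n = B (sgn n) \<and> C n = C (sgn n) \<and> D n = D (sgn n)"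
proof -
  from assms obtain A B C D xi1p xi2p ze1p ze2p xi1m xi2m ze1m ze2m
    where "\<And>n. onb2 (A n) (B n) \<and> onb2 (C n) (D n)" "\<And>f. f \<in> ell2 \<Longrightarrow> U f = walk_repr A B C D f"
      and phases: "\<And>n::int.
         (n \<ge> 1 \<longrightarrow> A n = xi1p \<and> B n = xi2p \<and> C n = ze1p \<and> D n = ze2p) \<and>
         (n \<le> -1 \<longrightarrow> A n = xi1m \<and> B n = xi2m \<and> C n = ze1m \<and> D n = ze2m)"
    unfolding two_phase_one_defect_def by (elim conjE exE) blast
  moreover have "A n = A (sgn n) \<and> B n = B (sgn n) \<and> C n = C (sgn n) \<and> D n = D (sgn n)" for n
    using phases[of n] phases[of "sgn n"] by (auto simp: sgn_if)
  ultimately show ?thesis using that by blast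
qed

lemma unitary_equiv_Uref:
  assumes onb: "\<And>n. onb2 (A n) (B n)"
    and U: "\<And>f. f \<in> ell2 \<Longrightarrow> U f = walk_repr A B C D f"
    and coins: "\<And>n. A n = A (sgn n) \<and> B n = B (sgn n) \<and> C n = C (sgn n) \<and> D n = D (sgn n)"
    and polar: "\<And>n. coin_polar (A n) (B n) (C n) (D n) (r n) (\<alpha> n) (\<beta> n) (\<tau> n)"
  obtains mu1 mu2 mu3 where "unitary_equiv U (Uref (r 1) (r (-1)) (r 0) mu1 mu2 mu3)"
proof -
  obtain ta lam tb mu1 mu2 mu3 where gauge:
    "\<And>m. ta m - ta (m - 1) - lam + \<alpha> (sgn m) = 0"
    "\<And>m. tb m - ta (m - 1) - lam + \<beta> (sgn m) = (if m = 0 then mu1 else 0)"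
    "\<And>m. ta m - tb (m + 1) - lam + (\<tau> (sgn m) - \<beta> (sgn m))
           = (if m = 0 then mu2 else if m > 0 then mu3 else 0)"
    "\<And>m. tb m - tb (m + 1) - lam + (\<tau> (sgn m) - \<alpha> (sgn m))
           = (if m = 0 then mu1 + mu2 else if m > 0 then mu3 else 0)"
    using gauge_phases[of \<alpha> \<beta> \<tau>] by blast
  have "unitary_equiv U (Uref (r 1) (r (-1)) (r 0) mu1 mu2 mu3)"
    unfolding Uref_eq_walk_repr
  proof (rule unitary_equiv_walk_repr_gauge[OF onb U])
    fix m
    have coeffs: "coin_polar (A m) (B m) (C m) (D m) (r (sgn m)) (\<alpha> (sgn m)) (\<beta> (sgn m)) (\<tau> (sgn m))"
      using polar[of "sgn m"] coins[of m] by simp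
    then show "vref (r 1) (r (-1)) (r 0) mu1 m
        = (cis (ta m - ta (m - 1) - lam) * cinner (A m) (C m),
           cis (tb m - ta (m - 1) - lam) * cinner (B m) (C m))"
      by (simp add: vref_sgn coin_polar_def cis_mult_polar gauge)
    from coeffs show "wref (r 1) (r (-1)) (r 0) mu1 mu2 mu3 m
        = (cis (ta m - tb (m + 1) - lam) * cinner (A m) (D m),
           cis (tb m - tb (m + 1) - lam) * cinner (B m) (D m))"
      by (simp add: wref_sgn coin_polar_def cis_mult_polar gauge)
  qed
  then show ?thesis by (rule that)
qed

theorem theorem2p7:
  fixes U :: "state \<Rightarrow> state"
  assumes "two_phase_one_defect U"
  shows "\<exists>rp rm r0 mu1 mu2 mu3.
           0 \<le> rp \<and> rp \<le> 1 \<and> 0 \<le> rm \<and> rm \<le> 1 \<and> 0 \<le> r0 \<and> r0 \<le> 1 \<and>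
           unitary_equiv U (Uref rp rm r0 mu1 mu2 mu3)"
proof -
  obtain A B C D where onb: "\<And>n. onb2 (A n) (B n)" "\<And>n. onb2 (C n) (D n)"
    and U: "\<And>f. f \<in> ell2 \<Longrightarrow> U f = walk_repr A B C D f"
    and coins: "\<And>n. A n = A (sgn n) \<and> B n = B (sgn n) \<and> C n = C (sgn n) \<and> D n = D (sgn n)"
    using two_phase_one_defectE[OF assms] by metis
  have "\<exists>r \<alpha> \<beta> \<tau>. coin_polar (A n) (B n) (C n) (D n) r \<alpha> \<beta> \<tau>" for n
    using onb2_coin_polar onb by blast
  then obtain r \<alpha> \<beta> \<tau> where polar: "\<And>n. coin_polar (A n) (B n) (C n) (D n) (r n) (\<alpha> n) (\<beta> n) (\<tau> n)"
    by metis
  obtain mu1 mu2 mu3 where "unitary_equiv U (Uref (r 1) (r (-1)) (r 0) mu1 mu2 mu3)"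
    using unitary_equiv_Uref[OF onb(1) U coins polar] .
  moreover have "0 \<le> r n \<and> r n \<le> 1" for n
    using polar[of n] by (simp add: coin_polar_def)
  ultimately show ?thesis by blast
qed

end
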